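(* For all closed terms $P,Q\in\mathcal S_A$: $\mathrm{EqFSCL}\vdash P=Q$ if and only if $\mathrm{FSCL}\vdash P=Q$, where $\mathrm{FSCL}\vdash P=Q$ means that $P=Q$ is derivable in equational logic over the signature $\Sigma_{CP}(A)\cup\Sigma_{SCL}(A)$ from the axioms CP1–CP4 together with $\neg x=\mathsf F\triangleleft x\triangleright\mathsf T$, $x\land^\circ y=y\triangleleft x\triangleright\mathsf F$ and $x\lor^\circ y=\mathsf T\triangleleft x\triangleright y$.
   Context: Let $A$ be a nonempty set of atoms. $\Sigma_{SCL}(A)$ has constants $\mathsf T,\mathsf F$, atoms $a\in A$, unary $\neg$, binary $\land^\circ$ (left-sequential conjunction) and $\lor^\circ$ (left-sequential disjunction); $\mathcal S_A$ is the set of its closed terms. $\Sigma_{CP}(A)$ has constants $\mathsf T,\mathsf F$, atoms $a\in A$, and Hoare's ternary conditional $x\triangleleft y\triangleright z$ ("if $y$ then $x$ else $z$"). CP consists of: (CP1) $x\triangleleft\mathsf T\triangleright y=x$; (CP2) $x\triangleleft\mathsf F\triangleright y=y$; (CP3) $\mathsf T\triangleleft x\triangleright\mathsf F=x$; (CP4) $x\triangleleft(y\triangleleft z\triangleright u)\triangleright v=(x\triangleleft y\triangleright v)\triangleleft z\triangleright(x\triangleleft u\triangleright v)$. (In the paper, FSCL is defined as the logic whose consequences are those of exporting $\{\mathsf T,\neg,\land^\circ\}$ from CP plus the definitions of $\neg$ and $\land^\circ$, with $\mathsf F=\neg\mathsf T$ and $x\lor^\circ y=\neg(\neg x\land^\circ\neg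 y)$ added; these are derivably equal to the definitions above.) EqFSCL is the set of equations in variables $x,y,z$: (F1) $\mathsf F=\neg\mathsf T$; (F2) $x\lor^\circ y=\neg(\neg x\land^\circ\neg y)$; (F3) $\neg\neg x=x$; (F4) $\mathsf T\land^\circ x=x$; (F5) $x\lor^\circ\mathsf F=x$; (F6) $\mathsf F\land^\circ x=\mathsf F$; (F7) $(x\land^\circ y)\land^\circ z=x\land^\circ(y\land^\circ z)$; (F8) $\neg x\land^\circ\mathsf F=x\land^\circ\mathsf F$; (F9) $(x\land^\circ\mathsf F)\lor^\circ y=(x\lor^\circ\mathsf T)\land^\circ y$; (F10) $(x\land^\circ y)\lor^\circ(z\land^\circ\mathsf F)=(x\lor^\circ(z\land^\circ\mathsf F))\land^\circ(y\lor^\circ(z\land^\circ\mathsf F))$. $\vdash$ denotes derivability in equational logic. *)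

theory Defs
  imports Main
begin

text \<open>Terms over the combined signature Sigma_CP(A) \<union> Sigma_SCL(A) with variables.
  The atom set A is the (nonempty) type 'a.\<close>
datatype 'a trm =
    Var nat
  | Tt
  | Ff
  | At 'a
  | Neg "'a trm"
  | LAnd "'a trm" "'a trm"
  | LOr "'a trm" "'a trm"
  | Cond "'a trm" "'a trm" "'a trm"  \<comment> \<open>Cond x y z = x \<triangleleft> y \<triangleright> z\<close>

primrec subst :: "(nat \<Rightarrow> 'a trm) \<Rightarrow> 'a trm \<Rightarrow> 'a trm" where
  "subst s (Var n) = s n"
| "subst s Tt = Tt"
| "subst s Ff = Ff"
| "subst s (At a) = At a"
| "subst s (Neg t) = Neg (subst s t)"
| "subst s (LAnd t u) = LAnd (subst s t) (subst s u)"
| "subst s (LOr t u) = LOr (subst s t) (subst s u)"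
| "subst s (Cond t u v) = Cond (subst s t) (subst s u) (subst s v)"

primrec scl_term :: "'a trm \<Rightarrow> bool" where
  "scl_term (Var n) = True"
| "scl_term Tt = True"
| "scl_term Ff = True"
| "scl_term (At a) = True"
| "scl_term (Neg t) = scl_term t"
| "scl_term (LAnd t u) = (scl_term t \<and> scl_term u)"
| "scl_term (LOr t u) = (scl_term t \<and> scl_term u)"
| "scl_term (Cond t u v) = False"

primrec closed :: "'a trm \<Rightarrow> bool" where
  "closed (Var n) = False"
| "closed Tt = True"
| "closed Ff = True"
| "closed (At a) = True"
| "closed (Neg t) = closed t"
| "closed (LAnd t u) = (closed t \<and> closed u)"
| "closed (LOr t u) = (closed t \<and> closed u)"
| "closed (Cond t u v) = (closed t \<and> closed u \<and> closed v)"

definition closed_scl :: "'a trm \<Rightarrow> bool" where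
  "closed_scl t \<longleftrightarrow> scl_term t \<and> closed t"

text \<open>Equational logic derivability from axioms E over the signature whose terms
  are those satisfying Sg (Sg is closed under subterms and contains all variables).\<close>
inductive derivable :: "('a trm \<times> 'a trm) set \<Rightarrow> ('a trm \<Rightarrow> bool) \<Rightarrow> 'a trm \<Rightarrow> 'a trm \<Rightarrow> bool"
  for E :: "('a trm \<times> 'a trm) set" and Sg :: "'a trm \<Rightarrow> bool" where
  ax: "(l, r) \<in> E \<Longrightarrow> (\<forall>n. Sg (s n)) \<Longrightarrow> Sg (subst s l) \<Longrightarrow> Sg (subst s r)
       \<Longrightarrow> derivable E Sg (subst s l) (subst s r)"
| refl: "Sg t \<Longrightarrow> derivable E Sg t t"
| sym: "derivable E Sg t u \<Longrightarrow> derivable E Sg u t"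
| trans: "derivable E Sg t u \<Longrightarrow> derivable E Sg u v \<Longrightarrow> derivable E Sg t v"
| cong_neg: "derivable E Sg t t' \<Longrightarrow> Sg (Neg t) \<Longrightarrow> Sg (Neg t')
       \<Longrightarrow> derivable E Sg (Neg t) (Neg t')"
| cong_and: "derivable E Sg t t' \<Longrightarrow> derivable E Sg u u'
       \<Longrightarrow> Sg (LAnd t u) \<Longrightarrow> Sg (LAnd t' u')
       \<Longrightarrow> derivable E Sg (LAnd t u) (LAnd t' u')"
| cong_or: "derivable E Sg t t' \<Longrightarrow> derivable E Sg u u'
       \<Longrightarrow> Sg (LOr t u) \<Longrightarrow> Sg (LOr t' u')
       \<Longrightarrow> derivable E Sg (LOr t u) (LOr t' u')"
| cong_cond: "derivable E Sg t t' \<Longrightarrow> derivable E Sg u u' \<Longrightarrow> derivable E Sg v v'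
       \<Longrightarrow> Sg (Cond t u v) \<Longrightarrow> Sg (Cond t' u' v')
       \<Longrightarrow> derivable E Sg (Cond t u v) (Cond t' u' v')"

abbreviation "vx \<equiv> Var 0"
abbreviation "vy \<equiv> Var 1"
abbreviation "vz \<equiv> Var 2"
abbreviation "vu \<equiv> Var 3"
abbreviation "vv \<equiv> Var 4"

definition EqFSCL :: "('a trm \<times> 'a trm) set" where
  "EqFSCL = {
    (Ff, Neg Tt),
    (LOr vx vy, Neg (LAnd (Neg vx) (Neg vy))),
    (Neg (Neg vx), vx),
    (LAnd Tt vx, vx),
    (LOr vx Ff, vx),
    (LAnd Ff vx, Ff),
    (LAnd (LAnd vx vy) vz, LAnd vx (LAnd vy vz)),
    (LAnd (Neg vx) Ff, LAnd vx Ff),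
    (LOr (LAnd vx Ff) vy, LAnd (LOr vx Tt) vy),
    (LOr (LAnd vx vy) (LAnd vz Ff), LAnd (LOr vx (LAnd vz Ff)) (LOr vy (LAnd vz Ff)))
  }"

definition FSCL_ax :: "('a trm \<times> 'a trm) set" where
  "FSCL_ax = {
    (Cond vx Tt vy, vx),
    (Cond vx Ff vy, vy),
    (Cond Tt vx Ff, vx),
    (Cond vx (Cond vy vz vu) vv, Cond (Cond vx vy vv) vz (Cond vx vu vv)),
    (Neg vx, Cond Ff vx Tt),
    (LAnd vx vy, Cond vy vx Ff),
    (LOr vx vy, Cond Tt vx vy)
  }"

end

theory Submission
  imports Defs
begin

text \<open>A closed term denotes a binary decision tree over the atoms with \<open>T\<close>/\<open>F\<close> leaves; the
  conditional \<open>x \<triangleleft> y \<triangleright> z\<close> grafts the tree of \<open>x\<close> onto the \<open>T\<close>-leaves and the tree of \<open>z\<close>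
  onto the \<open>F\<close>-leaves of the tree of \<open>y\<close>. Both FSCL and EqFSCL are sound for this semantics.
  FSCL is complete for it, because CP1--CP4 rewrite every closed term into the nested
  conditional of its tree. EqFSCL proves every closed SCL term equal to a normal form, and
  different normal forms have different trees: the trees of normal forms decompose uniquely,
  the key fact being that a conjunction of trees having both kinds of leaves is never a
  disjunction of such trees. So on closed SCL terms both logics prove exactly the equations
  between terms with the same tree.\<close>

section \<open>Decision-tree semantics\<close>

datatype 'a dtree = Leaf bool | Node 'a "'a dtree" "'a dtree"

primrec graft :: "'a dtree \<Rightarrow> 'a dtree \<Rightarrow> 'a dtree \<Rightarrow> 'a dtree" where
  "graft (Leaf b) X Y = (if b then X else Y)"
| "graft (Node a l r) X Y = Node a (graft l X Y) (graft r X Y)"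

lemma graft_assoc: "graft (graft X A B) C D = graft X (graft A C D) (graft B C D)"
  by (induction X) auto

lemma graft_Leaf_Leaf [simp]: "graft X (Leaf True) (Leaf False) = X"
  by (induction X) auto

definition tconj :: "'a dtree \<Rightarrow> 'a dtree \<Rightarrow> 'a dtree" where
  "tconj X Y = graft X Y (Leaf False)"

definition tdisj :: "'a dtree \<Rightarrow> 'a dtree \<Rightarrow> 'a dtree" where
  "tdisj X Y = graft X (Leaf True) Y"

definition tneg :: "'a dtree \<Rightarrow> 'a dtree" where
  "tneg X = graft X (Leaf False) (Leaf True)"

primrec den :: "(nat \<Rightarrow> 'a dtree) \<Rightarrow> 'a trm \<Rightarrow> 'a dtree" where
  "den \<rho> (Var n) = \<rho> n"
| "den \<rho> Tt = Leaf True"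
| "den \<rho> Ff = Leaf False"
| "den \<rho> (At a) = Node a (Leaf True) (Leaf False)"
| "den \<rho> (Neg t) = tneg (den \<rho> t)"
| "den \<rho> (LAnd t u) = tconj (den \<rho> t) (den \<rho> u)"
| "den \<rho> (LOr t u) = tdisj (den \<rho> t) (den \<rho> u)"
| "den \<rho> (Cond t u v) = graft (den \<rho> u) (den \<rho> t) (den \<rho> v)"

lemma den_subst: "den \<rho> (subst s t) = den (\<lambda>n. den \<rho> (s n)) t"
  by (induction t) auto

lemma derivable_in_signature: "derivable E Sg t u \<Longrightarrow> Sg t \<and> Sg u"
  by (induction rule: derivable.induct) auto

lemma derivable_den_eq:
  assumes "derivable E Sg t u" and "\<And>l r \<rho>. (l, r) \<in> E \<Longrightarrow> den \<rho> l = den \<rho> r"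
  shows "den \<rho> t = den \<rho> u"
  using assms(1)
proof (induction arbitrary: \<rho> rule: derivable.induct)
  case (ax l r s)
  then show ?case using assms(2) by (simp add: den_subst)
qed auto

lemma FSCL_ax_den_eq: "(l, r) \<in> FSCL_ax \<Longrightarrow> den \<rho> l = den \<rho> r"
  unfolding FSCL_ax_def by (auto simp: tconj_def tdisj_def tneg_def graft_assoc)

lemma EqFSCL_den_eq: "(l, r) \<in> EqFSCL \<Longrightarrow> den \<rho> l = den \<rho> r"
  unfolding EqFSCL_def by (auto simp: tconj_def tdisj_def tneg_def graft_assoc)

section \<open>Completeness of FSCL for closed terms\<close>

abbreviation fscl_derivable :: "'a trm \<Rightarrow> 'a trm \<Rightarrow> bool" (infix "\<approx>\<^sub>F" 50) where
  "t \<approx>\<^sub>F u \<equiv> derivable FSCL_ax (\<lambda>_. True) t u"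

lemma fscl_axiom: "(l, r) \<in> FSCL_ax \<Longrightarrow> subst s l \<approx>\<^sub>F subst s r"
  by (rule derivable.ax) auto

lemma fscl_cp1: "Cond x Tt y \<approx>\<^sub>F x"
  using fscl_axiom[of "Cond vx Tt vy" vx "\<lambda>n. if n = 0 then x else y"] by (simp add: FSCL_ax_def)

lemma fscl_cp2: "Cond x Ff y \<approx>\<^sub>F y"
  using fscl_axiom[of "Cond vx Ff vy" vy "\<lambda>n. if n = 0 then x else y"] by (simp add: FSCL_ax_def)

lemma fscl_cp3: "Cond Tt x Ff \<approx>\<^sub>F x"
  using fscl_axiom[of "Cond Tt vx Ff" vx "\<lambda>n. x"] by (simp add: FSCL_ax_def)

lemma fscl_cp4: "Cond x (Cond y z u) v \<approx>\<^sub>F Cond (Cond x y v) z (Cond x u v)"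
  using fscl_axiom[of "Cond vx (Cond vy vz vu) vv" "Cond (Cond vx vy vv) vz (Cond vx vu vv)"
      "\<lambda>n. if n = 0 then x else if n = 1 then y else if n = 2 then z else if n = 3 then u else v"]
  by (simp add: FSCL_ax_def)

lemma fscl_Neg: "Neg x \<approx>\<^sub>F Cond Ff x Tt"
  using fscl_axiom[of "Neg vx" "Cond Ff vx Tt" "\<lambda>n. x"] by (simp add: FSCL_ax_def)

lemma fscl_LAnd: "LAnd x y \<approx>\<^sub>F Cond y x Ff"
  using fscl_axiom[of "LAnd vx vy" "Cond vy vx Ff" "\<lambda>n. if n = 0 then x else y"]
  by (simp add: FSCL_ax_def)

lemma fscl_LOr: "LOr x y \<approx>\<^sub>F Cond Tt x y"
  using fscl_axiom[of "LOr vx vy" "Cond Tt vx vy" "\<lambda>n. if n = 0 then x else y"]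
  by (simp add: FSCL_ax_def)

lemma fscl_refl: "t \<approx>\<^sub>F t"
  by (rule derivable.refl) simp

lemma fscl_trans [trans]: "t \<approx>\<^sub>F u \<Longrightarrow> u \<approx>\<^sub>F v \<Longrightarrow> t \<approx>\<^sub>F v"
  by (rule derivable.trans)

lemma fscl_Cond_cong: "a \<approx>\<^sub>F a' \<Longrightarrow> b \<approx>\<^sub>F b' \<Longrightarrow> c \<approx>\<^sub>F c' \<Longrightarrow> Cond a b c \<approx>\<^sub>F Cond a' b' c'"
  by (rule derivable.cong_cond) auto

primrec cond_term :: "'a dtree \<Rightarrow> 'a trm" where
  "cond_term (Leaf b) = (if b then Tt else Ff)"
| "cond_term (Node a l r) = Cond (cond_term l) (At a) (cond_term r)"

lemma Cond_cond_term: "Cond (cond_term X) (cond_term Y) (cond_term Z) \<approx>\<^sub>F cond_term (graft Y X Z)"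
proof (induction Y)
  case (Leaf b)
  then show ?case by (cases b) (auto intro: fscl_cp1 fscl_cp2)
next
  case (Node a l r)
  have "Cond (cond_term X) (cond_term (Node a l r)) (cond_term Z)
      \<approx>\<^sub>F Cond (Cond (cond_term X) (cond_term l) (cond_term Z)) (At a)
           (Cond (cond_term X) (cond_term r) (cond_term Z))"
    by (simp add: fscl_cp4)
  also have "\<dots> \<approx>\<^sub>F Cond (cond_term (graft l X Z)) (At a) (cond_term (graft r X Z))"
    using Node by (intro fscl_Cond_cong fscl_refl)
  finally show ?case by simp
qed

lemma closed_fscl_cond_term_den: "closed t \<Longrightarrow> t \<approx>\<^sub>F cond_term (den \<rho> t)"
proof (induction t)
  case (At a)
  then show ?case using derivable.sym[OF fscl_cp3[of "At a"]] by simp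
next
  case (Neg t)
  have "Neg t \<approx>\<^sub>F Cond Ff t Tt" by (rule fscl_Neg)
  also have "\<dots> \<approx>\<^sub>F Cond (cond_term (Leaf False)) (cond_term (den \<rho> t)) (cond_term (Leaf True))"
    using Neg by (auto intro: fscl_Cond_cong fscl_refl)
  also have "\<dots> \<approx>\<^sub>F cond_term (den \<rho> (Neg t))"
    using Cond_cond_term[of "Leaf False" "den \<rho> t" "Leaf True"] by (simp add: tneg_def)
  finally show ?case .
next
  case (LAnd t u)
  have "LAnd t u \<approx>\<^sub>F Cond u t Ff" by (rule fscl_LAnd)
  also have "\<dots> \<approx>\<^sub>F Cond (cond_term (den \<rho> u)) (cond_term (den \<rho> t)) (cond_term (Leaf False))"
    using LAnd by (auto intro: fscl_Cond_cong fscl_refl)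
  also have "\<dots> \<approx>\<^sub>F cond_term (den \<rho> (LAnd t u))"
    using Cond_cond_term[of "den \<rho> u" "den \<rho> t" "Leaf False"] by (simp add: tconj_def)
  finally show ?case .
next
  case (LOr t u)
  have "LOr t u \<approx>\<^sub>F Cond Tt t u" by (rule fscl_LOr)
  also have "\<dots> \<approx>\<^sub>F Cond (cond_term (Leaf True)) (cond_term (den \<rho> t)) (cond_term (den \<rho> u))"
    using LOr by (auto intro: fscl_Cond_cong fscl_refl)
  also have "\<dots> \<approx>\<^sub>F cond_term (den \<rho> (LOr t u))"
    using Cond_cond_term[of "Leaf True" "den \<rho> t" "den \<rho> u"] by (simp add: tdisj_def)
  finally show ?case .
next
  case (Cond t u v)
  have "Cond t u v \<approx>\<^sub>F Cond (cond_term (den \<rho> t)) (cond_term (den \<rho> u)) (cond_term (den \<rho> v))"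
    using Cond by (auto intro: fscl_Cond_cong)
  also have "\<dots> \<approx>\<^sub>F cond_term (den \<rho> (Cond t u v))"
    using Cond_cond_term[of "den \<rho> t" "den \<rho> u" "den \<rho> v"] by simp
  finally show ?case .
qed (auto intro: fscl_refl)

lemma fscl_complete: "closed t \<Longrightarrow> closed u \<Longrightarrow> den \<rho> t = den \<rho> u \<Longrightarrow> t \<approx>\<^sub>F u"
  by (metis closed_fscl_cond_term_den derivable.sym fscl_trans)

section \<open>The term algebra of EqFSCL\<close>

abbreviation eqfscl_derivable :: "'a trm \<Rightarrow> 'a trm \<Rightarrow> bool" (infix "\<approx>\<^sub>E" 50) where
  "t \<approx>\<^sub>E u \<equiv> derivable EqFSCL scl_term t u"

lemma eqfscl_part_equivp: "part_equivp (derivable EqFSCL scl_term)"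
proof (rule part_equivpI)
  show "\<exists>x. x \<approx>\<^sub>E x" using derivable.refl[of scl_term Tt EqFSCL] by auto
  show "symp (derivable EqFSCL scl_term)" by (auto intro: sympI derivable.sym)
  show "transp (derivable EqFSCL scl_term)" by (auto intro: transpI derivable.trans)
qed

quotient_type 'a scl_class = "'a trm" / partial: "derivable EqFSCL scl_term"
  by (rule eqfscl_part_equivp)

lift_definition qtrue :: "'a scl_class" ("\<^bold>T") is Tt
  by (rule derivable.refl) simp

lift_definition qfalse :: "'a scl_class" ("\<^bold>F") is Ff
  by (rule derivable.refl) simp

lift_definition qatom :: "'a \<Rightarrow> 'a scl_class" is At
  by (rule derivable.refl) simp

lift_definition qvar :: "nat \<Rightarrow> 'a scl_class" is Var
  by (rule derivable.refl) simp

lift_definition qneg :: "'a scl_class \<Rightarrow> 'a scl_class" ("\<^bold>\<not> _" [80] 80) is Neg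
  by (rule derivable.cong_neg) (auto dest: derivable_in_signature)

lift_definition qand :: "'a scl_class \<Rightarrow> 'a scl_class \<Rightarrow> 'a scl_class" (infixr "\<^bold>\<and>" 70) is LAnd
  by (rule derivable.cong_and) (auto dest: derivable_in_signature)

lift_definition qor :: "'a scl_class \<Rightarrow> 'a scl_class \<Rightarrow> 'a scl_class" (infixr "\<^bold>\<or>" 65) is LOr
  by (rule derivable.cong_or) (auto dest: derivable_in_signature)

primrec cls :: "'a trm \<Rightarrow> 'a scl_class" where
  "cls (Var n) = qvar n"
| "cls Tt = \<^bold>T"
| "cls Ff = \<^bold>F"
| "cls (At a) = qatom a"
| "cls (Neg t) = \<^bold>\<not> cls t"
| "cls (LAnd t u) = cls t \<^bold>\<and> cls u"
| "cls (LOr t u) = cls t \<^bold>\<or> cls u"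
| "cls (Cond t u v) = undefined"

lemma cr_scl_class_cls: "scl_term t \<Longrightarrow> cr_scl_class t (cls t)"
proof (induction t)
  case (Var n) then show ?case
    using qvar.transfer by (auto simp: rel_fun_def pcr_scl_class_def OO_def trm.rel_eq)
next
  case Tt then show ?case
    using qtrue.transfer by (auto simp: pcr_scl_class_def OO_def trm.rel_eq)
next
  case Ff then show ?case
    using qfalse.transfer by (auto simp: pcr_scl_class_def OO_def trm.rel_eq)
next
  case (At a) then show ?case
    using qatom.transfer by (auto simp: rel_fun_def pcr_scl_class_def OO_def trm.rel_eq)
next
  case (Neg t) then show ?case
    using qneg.transfer by (auto simp: rel_fun_def pcr_scl_class_def OO_def trm.rel_eq)
next
  case (LAnd t u) then show ?case
    using qand.transfer by (auto simp: rel_fun_def pcr_scl_class_def OO_def trm.rel_eq)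
next
  case (LOr t u) then show ?case
    using qor.transfer by (auto simp: rel_fun_def pcr_scl_class_def OO_def trm.rel_eq)
qed auto

lemma cls_eq_iff_eqfscl: "scl_term t \<Longrightarrow> scl_term u \<Longrightarrow> cls t = cls u \<longleftrightarrow> t \<approx>\<^sub>E u"
  using cr_scl_class_cls[of t] cr_scl_class_cls[of u] Quotient_rel[OF Quotient_scl_class, of t u]
  by (auto simp: cr_scl_class_def)

lemma scl_term_subst: "scl_term t \<Longrightarrow> (\<forall>n. scl_term (s n)) \<Longrightarrow> scl_term (subst s t)"
  by (induction t) auto

lemma eqfscl_axiom:
  assumes "(l, r) \<in> EqFSCL" and "scl_term x" "scl_term y" "scl_term z"
  defines "s \<equiv> \<lambda>n. if n = 0 then x else if n = 1 then y else z"
  shows "subst s l \<approx>\<^sub>E subst s r"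
  by (rule derivable.ax) (use assms in \<open>auto simp: EqFSCL_def intro!: scl_term_subst\<close>)

lemma qfalse_def_axiom: "\<^bold>F = \<^bold>\<not> \<^bold>T"
  by transfer (use eqfscl_axiom[of Ff "Neg Tt" Tt Tt Tt] in \<open>auto simp: EqFSCL_def\<close>)

lemma qor_def_axiom: "x \<^bold>\<or> y = \<^bold>\<not> (\<^bold>\<not> x \<^bold>\<and> \<^bold>\<not> y)"
  apply transfer
  subgoal for x y
    using eqfscl_axiom[of "LOr vx vy" "Neg (LAnd (Neg vx) (Neg vy))" x y Tt]
    by (auto simp: EqFSCL_def dest: derivable_in_signature)
  done

lemma qneg_qneg: "\<^bold>\<not> \<^bold>\<not> x = x"
  apply transfer
  subgoal for x
    using eqfscl_axiom[of "Neg (Neg vx)" vx x Tt Tt]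
    by (auto simp: EqFSCL_def dest: derivable_in_signature)
  done

lemma qtrue_qand: "\<^bold>T \<^bold>\<and> x = x"
  apply transfer
  subgoal for x
    using eqfscl_axiom[of "LAnd Tt vx" vx x Tt Tt]
    by (auto simp: EqFSCL_def dest: derivable_in_signature)
  done

lemma qor_qfalse: "x \<^bold>\<or> \<^bold>F = x"
  apply transfer
  subgoal for x
    using eqfscl_axiom[of "LOr vx Ff" vx x Tt Tt]
    by (auto simp: EqFSCL_def dest: derivable_in_signature)
  done

lemma qfalse_qand: "\<^bold>F \<^bold>\<and> x = \<^bold>F"
  apply transfer
  subgoal for x
    using eqfscl_axiom[of "LAnd Ff vx" Ff x Tt Tt]
    by (auto simp: EqFSCL_def dest: derivable_in_signature)
  done

lemma qand_assoc: "(x \<^bold>\<and> y) \<^bold>\<and> z = x \<^bold>\<and> y \<^bold>\<and> z"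
  apply transfer
  subgoal for x y z
    using eqfscl_axiom[of "LAnd (LAnd vx vy) vz" "LAnd vx (LAnd vy vz)" x y z]
    by (auto simp: EqFSCL_def dest: derivable_in_signature)
  done

lemma qneg_qand_qfalse: "\<^bold>\<not> x \<^bold>\<and> \<^bold>F = x \<^bold>\<and> \<^bold>F"
  apply transfer
  subgoal for x
    using eqfscl_axiom[of "LAnd (Neg vx) Ff" "LAnd vx Ff" x Tt Tt]
    by (auto simp: EqFSCL_def dest: derivable_in_signature)
  done

lemma qor_qand_qfalse_left: "(x \<^bold>\<and> \<^bold>F) \<^bold>\<or> y = (x \<^bold>\<or> \<^bold>T) \<^bold>\<and> y"
  apply transfer
  subgoal for x y
    using eqfscl_axiom[of "LOr (LAnd vx Ff) vy" "LAnd (LOr vx Tt) vy" x y Tt]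
    by (auto simp: EqFSCL_def dest: derivable_in_signature)
  done

lemma qor_qand_qfalse_distrib:
  "(x \<^bold>\<and> y) \<^bold>\<or> (z \<^bold>\<and> \<^bold>F) = (x \<^bold>\<or> (z \<^bold>\<and> \<^bold>F)) \<^bold>\<and> (y \<^bold>\<or> (z \<^bold>\<and> \<^bold>F))"
  apply transfer
  subgoal for x y z
    using eqfscl_axiom[of "LOr (LAnd vx vy) (LAnd vz Ff)"
        "LAnd (LOr vx (LAnd vz Ff)) (LOr vy (LAnd vz Ff))" x y z]
    by (auto simp: EqFSCL_def dest: derivable_in_signature)
  done

lemma qneg_qtrue: "\<^bold>\<not> \<^bold>T = \<^bold>F"
  by (simp add: qfalse_def_axiom)

lemma qneg_qfalse: "\<^bold>\<not> \<^bold>F = \<^bold>T"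
  by (simp add: qfalse_def_axiom qneg_qneg)

lemma qneg_qor: "\<^bold>\<not> (x \<^bold>\<or> y) = \<^bold>\<not> x \<^bold>\<and> \<^bold>\<not> y"
  by (simp add: qor_def_axiom qneg_qneg)

lemma qneg_qand: "\<^bold>\<not> (x \<^bold>\<and> y) = \<^bold>\<not> x \<^bold>\<or> \<^bold>\<not> y"
  by (simp add: qor_def_axiom qneg_qneg)

lemma qand_qtrue: "x \<^bold>\<and> \<^bold>T = x"
  by (metis qneg_qand qneg_qneg qneg_qtrue qor_qfalse)

lemma qtrue_qor: "\<^bold>T \<^bold>\<or> x = \<^bold>T"
  by (simp add: qor_def_axiom qneg_qtrue qfalse_qand qneg_qfalse)

lemma qor_assoc: "(x \<^bold>\<or> y) \<^bold>\<or> z = x \<^bold>\<or> y \<^bold>\<or> z"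
  by (simp add: qor_def_axiom qneg_qneg qand_assoc)

lemma qneg_qor_qtrue: "\<^bold>\<not> x \<^bold>\<or> \<^bold>T = x \<^bold>\<or> \<^bold>T"
  by (simp add: qor_def_axiom qneg_qneg qneg_qtrue qneg_qand_qfalse)

lemma qand_qor_qtrue_distrib:
  "(x \<^bold>\<or> y) \<^bold>\<and> (z \<^bold>\<or> \<^bold>T) = (x \<^bold>\<and> (z \<^bold>\<or> \<^bold>T)) \<^bold>\<or> (y \<^bold>\<and> (z \<^bold>\<or> \<^bold>T))"
proof -
  have "\<^bold>\<not> ((x \<^bold>\<or> y) \<^bold>\<and> (z \<^bold>\<or> \<^bold>T)) = (\<^bold>\<not> x \<^bold>\<and> \<^bold>\<not> y) \<^bold>\<or> (\<^bold>\<not> z \<^bold>\<and> \<^bold>F)"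
    by (simp add: qneg_qor qneg_qand qneg_qtrue)
  also have "\<dots> = (\<^bold>\<not> x \<^bold>\<or> (\<^bold>\<not> z \<^bold>\<and> \<^bold>F)) \<^bold>\<and> (\<^bold>\<not> y \<^bold>\<or> (\<^bold>\<not> z \<^bold>\<and> \<^bold>F))"
    by (rule qor_qand_qfalse_distrib)
  also have "\<dots> = \<^bold>\<not> ((x \<^bold>\<and> (z \<^bold>\<or> \<^bold>T)) \<^bold>\<or> (y \<^bold>\<and> (z \<^bold>\<or> \<^bold>T)))"
    by (simp add: qneg_qor qneg_qand qneg_qtrue)
  finally show ?thesis by (metis qneg_qneg)
qed

lemma qand_qfalse_eq: "x \<^bold>\<and> \<^bold>F = (x \<^bold>\<or> \<^bold>T) \<^bold>\<and> \<^bold>F"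
  using qor_qand_qfalse_left[of x "\<^bold>F"] by (simp add: qor_qfalse)

lemma qor_qtrue_eq: "x \<^bold>\<or> \<^bold>T = (x \<^bold>\<and> \<^bold>F) \<^bold>\<or> \<^bold>T"
  using qor_qand_qfalse_left[of x "\<^bold>T"] by (simp add: qand_qtrue)

lemma qand_qor_qtrue: "(x \<^bold>\<and> y) \<^bold>\<or> \<^bold>T = (x \<^bold>\<and> (y \<^bold>\<or> \<^bold>T)) \<^bold>\<or> \<^bold>T"
proof -
  have "(x \<^bold>\<and> y) \<^bold>\<or> \<^bold>T = (x \<^bold>\<and> y \<^bold>\<and> \<^bold>F) \<^bold>\<or> \<^bold>T"
    by (subst qor_qtrue_eq) (simp add: qand_assoc)
  also have "\<dots> = (x \<^bold>\<and> (y \<^bold>\<or> \<^bold>T) \<^bold>\<and> \<^bold>F) \<^bold>\<or> \<^bold>T"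
    by (subst qand_qfalse_eq) simp
  also have "\<dots> = (x \<^bold>\<and> (y \<^bold>\<or> \<^bold>T)) \<^bold>\<or> \<^bold>T"
    by (subst (2) qor_qtrue_eq) (simp add: qand_assoc)
  finally show ?thesis .
qed

lemma qand_qfalse_qand: "(w \<^bold>\<and> \<^bold>F) \<^bold>\<and> x = w \<^bold>\<and> \<^bold>F"
  by (simp add: qand_assoc qfalse_qand)

text \<open>Classes that always evaluate to true, such as \<open>\<^bold>T\<close> and \<open>x \<^bold>\<or> \<^bold>T\<close>.\<close>

definition true_class :: "'a scl_class \<Rightarrow> bool" where
  "true_class v \<longleftrightarrow> v \<^bold>\<or> \<^bold>T = v"

lemma true_class_qtrue: "true_class \<^bold>T"
  by (simp add: true_class_def qtrue_qor)

lemma true_class_qor: "true_class v \<Longrightarrow> true_class (u \<^bold>\<or> v)"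
  by (simp add: true_class_def qor_assoc)

lemma true_class_qor_absorb: "true_class v \<Longrightarrow> v \<^bold>\<or> y = v"
  by (metis true_class_def qor_assoc qtrue_qor)

lemma true_class_qneg: "true_class v \<Longrightarrow> \<^bold>\<not> v = v \<^bold>\<and> \<^bold>F"
  by (metis true_class_def qneg_qor qneg_qtrue qneg_qand_qfalse)

lemma true_class_qneg_qand_qfalse: "true_class v \<Longrightarrow> \<^bold>\<not> (v \<^bold>\<and> \<^bold>F) = v"
  by (metis true_class_def qneg_qand qneg_qfalse qneg_qor_qtrue)

lemma true_class_qand_qor_distrib: "true_class v \<Longrightarrow> (x \<^bold>\<or> y) \<^bold>\<and> v = (x \<^bold>\<and> v) \<^bold>\<or> (y \<^bold>\<and> v)"
  by (metis true_class_def qand_qor_qtrue_distrib)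

lemma true_class_qand_qor_qfalse_distrib:
  "true_class v \<Longrightarrow> (x \<^bold>\<or> (w \<^bold>\<and> \<^bold>F)) \<^bold>\<and> v = (x \<^bold>\<and> v) \<^bold>\<or> (w \<^bold>\<and> \<^bold>F)"
  by (metis qor_qand_qfalse_distrib true_class_qor_absorb)

lemma true_class_qand_qfalse_qor: "true_class v \<Longrightarrow> (v \<^bold>\<and> \<^bold>F) \<^bold>\<or> y = v \<^bold>\<and> y"
  by (metis true_class_def qor_qand_qfalse_left)

section \<open>Normal forms\<close>

text \<open>In a \<open>T_form\<close>, \<open>(a \<and>\<^sup>\<circ> P) \<or>\<^sup>\<circ> Q\<close> stands for \<open>P \<triangleleft> a \<triangleright> Q\<close>, so
  \<open>T_form\<close>s are the basic forms all of whose leaves are \<open>T\<close>. The \<open>shape\<close> of a mixed form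
  is its main connective; constraining it keeps nested conjunctions and disjunctions associated
  to the right.\<close>

inductive T_form :: "'a trm \<Rightarrow> bool" where
  T_form_Tt: "T_form Tt"
| T_form_At: "T_form P \<Longrightarrow> T_form Q \<Longrightarrow> T_form (LOr (LAnd (At a) P) Q)"

inductive literal :: "'a trm \<Rightarrow> bool" where
  literal_pos: "T_form R \<Longrightarrow> T_form Q \<Longrightarrow> literal (LOr (LAnd (At a) R) (LAnd Q Ff))"
| literal_neg: "T_form R \<Longrightarrow> T_form Q \<Longrightarrow> literal (LOr (LAnd (Neg (At a)) R) (LAnd Q Ff))"

datatype shape = Lit | Conj | Disj

inductive mixed_form :: "shape \<Rightarrow> 'a trm \<Rightarrow> bool" where
  mixed_lit: "literal L \<Longrightarrow> mixed_form Lit L"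
| mixed_conj: "mixed_form k A \<Longrightarrow> k \<noteq> Conj \<Longrightarrow> mixed_form k' B \<Longrightarrow> mixed_form Conj (LAnd A B)"
| mixed_disj: "mixed_form k A \<Longrightarrow> k \<noteq> Disj \<Longrightarrow> mixed_form k' B \<Longrightarrow> mixed_form Disj (LOr A B)"

definition normal_form :: "'a trm \<Rightarrow> bool" where
  "normal_form t \<longleftrightarrow> T_form t \<or> (\<exists>P. t = LAnd P Ff \<and> T_form P)
     \<or> (\<exists>P M k. t = LAnd P M \<and> T_form P \<and> mixed_form k M)"

lemma normal_form_cases:
  assumes "normal_form t"
  obtains (T) "T_form t"
  | (F) P where "t = LAnd P Ff" "T_form P"
  | (M) P M k where "t = LAnd P M" "T_form P" "mixed_form k M"
  using assms unfolding normal_form_def by blast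

lemma closed_scl_T_form: "T_form P \<Longrightarrow> scl_term P \<and> closed P"
  by (induction rule: T_form.induct) auto

lemma closed_scl_mixed_form: "mixed_form k M \<Longrightarrow> scl_term M \<and> closed M"
  by (induction rule: mixed_form.induct) (auto elim!: literal.cases dest: closed_scl_T_form)

lemma closed_scl_normal_form: "normal_form t \<Longrightarrow> scl_term t \<and> closed t"
  by (auto simp: normal_form_def dest: closed_scl_T_form closed_scl_mixed_form)

lemma true_class_T_form: "T_form P \<Longrightarrow> true_class (cls P)"
  by (induction rule: T_form.induct) (auto simp: true_class_qtrue true_class_qor)

lemma T_form_qand: "T_form P \<Longrightarrow> T_form Q \<Longrightarrow> \<exists>R. T_form R \<and> cls R = cls P \<^bold>\<and> cls Q"
proof (induction arbitrary: Q rule: T_form.induct)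
  case T_form_Tt
  then show ?case by (auto simp: qtrue_qand)
next
  case (T_form_At P1 P2 a)
  obtain R1 where R1: "T_form R1" "cls R1 = cls P1 \<^bold>\<and> cls Q" using T_form_At by blast
  obtain R2 where R2: "T_form R2" "cls R2 = cls P2 \<^bold>\<and> cls Q" using T_form_At by blast
  have "cls (LOr (LAnd (At a) P1) P2) \<^bold>\<and> cls Q = (qatom a \<^bold>\<and> cls R1) \<^bold>\<or> cls R2"
    using R1 R2 true_class_T_form[OF T_form_At(5)]
    by (simp add: true_class_qand_qor_distrib qand_assoc)
  then show ?case
    using R1 R2 by (auto intro!: exI[of _ "LOr (LAnd (At a) R1) R2"] T_form.intros)
qed

fun dual_shape :: "shape \<Rightarrow> shape" where
  "dual_shape Lit = Lit"
| "dual_shape Conj = Disj"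
| "dual_shape Disj = Conj"

lemma qneg_pos_literal:
  assumes "T_form R" "T_form Q"
  shows "\<^bold>\<not> cls (LOr (LAnd (At a) R) (LAnd Q Ff)) = cls (LOr (LAnd (Neg (At a)) Q) (LAnd R Ff))"
proof -
  note T = true_class_T_form[OF assms(1)] true_class_T_form[OF assms(2)]
  have "\<^bold>\<not> cls (LOr (LAnd (At a) R) (LAnd Q Ff)) = \<^bold>\<not> (qatom a \<^bold>\<and> cls R) \<^bold>\<and> \<^bold>\<not> (cls Q \<^bold>\<and> \<^bold>F)"
    by (simp add: qneg_qor)
  also have "\<dots> = (\<^bold>\<not> qatom a \<^bold>\<or> (cls R \<^bold>\<and> \<^bold>F)) \<^bold>\<and> cls Q"
    by (simp only: qneg_qand[of "qatom a"] true_class_qneg[OF T(1)]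
        true_class_qneg_qand_qfalse[OF T(2)])
  also have "\<dots> = (\<^bold>\<not> qatom a \<^bold>\<and> cls Q) \<^bold>\<or> (cls R \<^bold>\<and> \<^bold>F)"
    by (rule true_class_qand_qor_qfalse_distrib[OF T(2)])
  finally show ?thesis by simp
qed

lemma qneg_neg_literal:
  assumes "T_form R" "T_form Q"
  shows "\<^bold>\<not> cls (LOr (LAnd (Neg (At a)) R) (LAnd Q Ff)) = cls (LOr (LAnd (At a) Q) (LAnd R Ff))"
proof -
  note T = true_class_T_form[OF assms(1)] true_class_T_form[OF assms(2)]
  have "\<^bold>\<not> cls (LOr (LAnd (Neg (At a)) R) (LAnd Q Ff))
      = \<^bold>\<not> (\<^bold>\<not> qatom a \<^bold>\<and> cls R) \<^bold>\<and> \<^bold>\<not> (cls Q \<^bold>\<and> \<^bold>F)"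
    by (simp add: qneg_qor)
  also have "\<dots> = (qatom a \<^bold>\<or> (cls R \<^bold>\<and> \<^bold>F)) \<^bold>\<and> cls Q"
    by (simp only: qneg_qand[of "\<^bold>\<not> qatom a"] qneg_qneg true_class_qneg[OF T(1)]
        true_class_qneg_qand_qfalse[OF T(2)])
  also have "\<dots> = (qatom a \<^bold>\<and> cls Q) \<^bold>\<or> (cls R \<^bold>\<and> \<^bold>F)"
    by (rule true_class_qand_qor_qfalse_distrib[OF T(2)])
  finally show ?thesis by simp
qed

lemma literal_qneg: "literal L \<Longrightarrow> \<exists>L'. literal L' \<and> cls L' = \<^bold>\<not> cls L"
proof (induction rule: literal.induct)
  case (literal_pos R Q a)
  then show ?case using qneg_pos_literal[OF literal_pos, of a]
    by (intro exI[of _ "LOr (LAnd (Neg (At a)) Q) (LAnd R Ff)"]) (simp add: literal.literal_neg)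
next
  case (literal_neg R Q a)
  then show ?case using qneg_neg_literal[OF literal_neg, of a]
    by (intro exI[of _ "LOr (LAnd (At a) Q) (LAnd R Ff)"]) (simp add: literal.literal_pos)
qed

lemma mixed_form_qneg: "mixed_form k M \<Longrightarrow> \<exists>M'. mixed_form (dual_shape k) M' \<and> cls M' = \<^bold>\<not> cls M"
proof (induction rule: mixed_form.induct)
  case (mixed_lit L)
  then show ?case using literal_qneg mixed_form.mixed_lit by (metis dual_shape.simps(1))
next
  case (mixed_conj k A k' B)
  then obtain A' B' where "mixed_form (dual_shape k) A'" "cls A' = \<^bold>\<not> cls A"
    "mixed_form (dual_shape k') B'" "cls B' = \<^bold>\<not> cls B"
    by blast
  moreover have "dual_shape k \<noteq> Disj" using mixed_conj(2) by (cases k) auto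
  ultimately show ?case by (auto simp: qneg_qand intro!: exI[of _ "LOr A' B'"] mixed_form.intros)
next
  case (mixed_disj k A k' B)
  then obtain A' B' where "mixed_form (dual_shape k) A'" "cls A' = \<^bold>\<not> cls A"
    "mixed_form (dual_shape k') B'" "cls B' = \<^bold>\<not> cls B"
    by blast
  moreover have "dual_shape k \<noteq> Conj" using mixed_disj(2) by (cases k) auto
  ultimately show ?case by (auto simp: qneg_qor intro!: exI[of _ "LAnd A' B'"] mixed_form.intros)
qed

lemma mixed_form_qand_T_form:
  "mixed_form k M \<Longrightarrow> T_form P \<Longrightarrow> \<exists>M'. mixed_form k M' \<and> cls M' = cls M \<^bold>\<and> cls P"
proof (induction arbitrary: P rule: mixed_form.induct)
  case (mixed_lit L)
  note P = true_class_T_form[OF mixed_lit(2)]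
  from mixed_lit(1) show ?case
  proof (cases rule: literal.cases)
    case (literal_pos R Q a)
    obtain R' where R': "T_form R'" "cls R' = cls R \<^bold>\<and> cls P"
      using T_form_qand[OF literal_pos(2) mixed_lit(2)] by blast
    have "cls L \<^bold>\<and> cls P = (qatom a \<^bold>\<and> cls R') \<^bold>\<or> (cls Q \<^bold>\<and> \<^bold>F)"
      using P R' by (simp add: literal_pos true_class_qand_qor_distrib qand_assoc qfalse_qand)
    then show ?thesis using literal_pos R'
      by (intro exI[of _ "LOr (LAnd (At a) R') (LAnd Q Ff)"])
        (auto intro: mixed_form.intros literal.intros)
  next
    case (literal_neg R Q a)
    obtain R' where R': "T_form R'" "cls R' = cls R \<^bold>\<and> cls P"
      using T_form_qand[OF literal_neg(2) mixed_lit(2)] by blast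
    have "cls L \<^bold>\<and> cls P = (\<^bold>\<not> qatom a \<^bold>\<and> cls R') \<^bold>\<or> (cls Q \<^bold>\<and> \<^bold>F)"
      using P R' by (simp add: literal_neg true_class_qand_qor_distrib qand_assoc qfalse_qand)
    then show ?thesis using literal_neg R'
      by (intro exI[of _ "LOr (LAnd (Neg (At a)) R') (LAnd Q Ff)"])
        (auto intro: mixed_form.intros literal.intros)
  qed
next
  case (mixed_conj k A k' B)
  then obtain B' where "mixed_form k' B'" "cls B' = cls B \<^bold>\<and> cls P" by blast
  then show ?case
    using mixed_conj by (auto simp: qand_assoc intro!: exI[of _ "LAnd A B'"] mixed_form.intros)
next
  case (mixed_disj k A k' B)
  then obtain A' B' where "mixed_form k A'" "cls A' = cls A \<^bold>\<and> cls P"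
    "mixed_form k' B'" "cls B' = cls B \<^bold>\<and> cls P"
    by blast
  then show ?case using mixed_disj true_class_T_form[OF mixed_disj(6)]
    by (auto simp: true_class_qand_qor_distrib intro!: exI[of _ "LOr A' B'"] mixed_form.intros)
qed

lemma mixed_form_qor_qand_qfalse:
  "mixed_form k M \<Longrightarrow> T_form P \<Longrightarrow> \<exists>M'. mixed_form k M' \<and> cls M' = cls M \<^bold>\<or> (cls P \<^bold>\<and> \<^bold>F)"
proof (induction arbitrary: P rule: mixed_form.induct)
  case (mixed_lit L)
  from mixed_lit(1) obtain a R Q l where RQ: "T_form R" "T_form Q"
    and L: "L = LOr (LAnd l R) (LAnd Q Ff)" and l: "l = At a \<or> l = Neg (At a)"
    by (cases rule: literal.cases) auto
  obtain Q' where Q': "T_form Q'" "cls Q' = cls Q \<^bold>\<and> cls P"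
    using T_form_qand[OF RQ(2) mixed_lit(2)] by blast
  have "cls L \<^bold>\<or> (cls P \<^bold>\<and> \<^bold>F) = (cls l \<^bold>\<and> cls R) \<^bold>\<or> (cls Q' \<^bold>\<and> \<^bold>F)"
    using Q' true_class_T_form[OF RQ(2)]
    by (simp add: L qor_assoc true_class_qand_qfalse_qor qand_assoc)
  then show ?case using RQ Q' l
    by (intro exI[of _ "LOr (LAnd l R) (LAnd Q' Ff)"])
      (auto intro: mixed_form.intros literal.intros)
next
  case (mixed_conj k A k' B)
  then obtain A' B' where "mixed_form k A'" "cls A' = cls A \<^bold>\<or> (cls P \<^bold>\<and> \<^bold>F)"
    "mixed_form k' B'" "cls B' = cls B \<^bold>\<or> (cls P \<^bold>\<and> \<^bold>F)"
    by blast
  then show ?case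
    using mixed_conj
    by (auto simp: qor_qand_qfalse_distrib intro!: exI[of _ "LAnd A' B'"] mixed_form.intros)
next
  case (mixed_disj k A k' B)
  then obtain B' where "mixed_form k' B'" "cls B' = cls B \<^bold>\<or> (cls P \<^bold>\<and> \<^bold>F)" by blast
  then show ?case
    using mixed_disj by (auto simp: qor_assoc intro!: exI[of _ "LOr A B'"] mixed_form.intros)
qed

lemma pos_literal_qor_qtrue:
  assumes "T_form Q"
  shows "cls (LOr (LAnd (At a) R) (LAnd Q Ff)) \<^bold>\<or> \<^bold>T = cls (LOr (LAnd (At a) R) Q)"
proof -
  have "cls (LOr (LAnd (At a) R) (LAnd Q Ff)) \<^bold>\<or> \<^bold>T = (qatom a \<^bold>\<and> cls R) \<^bold>\<or> (cls Q \<^bold>\<and> \<^bold>F) \<^bold>\<or> \<^bold>T"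
    by (simp add: qor_assoc)
  also have "\<dots> = (qatom a \<^bold>\<and> cls R) \<^bold>\<or> cls Q"
    by (simp only: true_class_qand_qfalse_qor[OF true_class_T_form[OF assms]] qand_qtrue)
  finally show ?thesis by simp
qed

lemma literal_qor_qtrue: "literal L \<Longrightarrow> \<exists>P. T_form P \<and> cls P = cls L \<^bold>\<or> \<^bold>T"
proof (induction rule: literal.induct)
  case (literal_pos R Q a)
  then show ?case using pos_literal_qor_qtrue[of Q a R]
    by (intro exI[of _ "LOr (LAnd (At a) R) Q"]) (auto intro: T_form.intros)
next
  case (literal_neg R Q a)
  have "cls (LOr (LAnd (Neg (At a)) R) (LAnd Q Ff)) \<^bold>\<or> \<^bold>T
      = cls (LOr (LAnd (At a) Q) (LAnd R Ff)) \<^bold>\<or> \<^bold>T"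
    by (metis qneg_neg_literal[OF literal_neg] qneg_qor_qtrue)
  then show ?case using pos_literal_qor_qtrue[of R a Q] literal_neg
    by (intro exI[of _ "LOr (LAnd (At a) Q) R"]) (auto intro: T_form.intros)
qed

lemma mixed_form_qor_qtrue_general:
  "mixed_form k M \<Longrightarrow> T_form P \<Longrightarrow> T_form W \<Longrightarrow>
   \<exists>R. T_form R \<and> cls R = ((cls M \<^bold>\<and> cls P) \<^bold>\<or> (cls W \<^bold>\<and> \<^bold>F)) \<^bold>\<or> \<^bold>T"
proof (induction arbitrary: P W rule: mixed_form.induct)
  case (mixed_lit L)
  obtain M1 where M1: "mixed_form Lit M1" "cls M1 = cls L \<^bold>\<and> cls P"
    using mixed_form_qand_T_form[OF mixed_form.mixed_lit[OF mixed_lit(1)] mixed_lit(2)] by blast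
  obtain M2 where M2: "mixed_form Lit M2" "cls M2 = cls M1 \<^bold>\<or> (cls W \<^bold>\<and> \<^bold>F)"
    using mixed_form_qor_qand_qfalse[OF M1(1) mixed_lit(3)] by blast
  have "literal M2" using M2(1) by (cases rule: mixed_form.cases) auto
  then show ?case using literal_qor_qtrue M1 M2 by metis
next
  case (mixed_conj k A k' B)
  obtain RB where RB: "T_form RB" "cls RB = ((cls B \<^bold>\<and> cls P) \<^bold>\<or> (cls W \<^bold>\<and> \<^bold>F)) \<^bold>\<or> \<^bold>T"
    using mixed_conj.IH(2)[OF mixed_conj.prems] by blast
  obtain RA where RA: "T_form RA" "cls RA = ((cls A \<^bold>\<and> cls RB) \<^bold>\<or> (cls W \<^bold>\<and> \<^bold>F)) \<^bold>\<or> \<^bold>T"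
    using mixed_conj.IH(1)[OF RB(1) mixed_conj.prems(2)] by blast
  have "((cls (LAnd A B) \<^bold>\<and> cls P) \<^bold>\<or> (cls W \<^bold>\<and> \<^bold>F)) \<^bold>\<or> \<^bold>T
      = ((cls A \<^bold>\<and> cls B \<^bold>\<and> cls P) \<^bold>\<or> (cls W \<^bold>\<and> \<^bold>F)) \<^bold>\<or> \<^bold>T"
    by (simp add: qand_assoc)
  also have "\<dots> = ((cls A \<^bold>\<or> (cls W \<^bold>\<and> \<^bold>F)) \<^bold>\<and> ((cls B \<^bold>\<and> cls P) \<^bold>\<or> (cls W \<^bold>\<and> \<^bold>F))) \<^bold>\<or> \<^bold>T"
    by (simp only: qor_qand_qfalse_distrib)
  also have "\<dots> = ((cls A \<^bold>\<or> (cls W \<^bold>\<and> \<^bold>F)) \<^bold>\<and> cls RB) \<^bold>\<or> \<^bold>T"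
    by (subst qand_qor_qtrue) (simp only: RB(2))
  also have "\<dots> = ((cls A \<^bold>\<and> cls RB) \<^bold>\<or> (cls W \<^bold>\<and> \<^bold>F)) \<^bold>\<or> \<^bold>T"
    by (simp only: true_class_qand_qor_distrib[OF true_class_T_form[OF RB(1)]] qand_qfalse_qand)
  finally show ?case using RA by auto
next
  case (mixed_disj k A k' B)
  obtain RB where RB: "T_form RB" "cls RB = ((cls B \<^bold>\<and> cls P) \<^bold>\<or> (cls W \<^bold>\<and> \<^bold>F)) \<^bold>\<or> \<^bold>T"
    using mixed_disj.IH(2)[OF mixed_disj.prems] by blast
  obtain RA where RA: "T_form RA" "cls RA = ((cls A \<^bold>\<and> cls P) \<^bold>\<or> (cls RB \<^bold>\<and> \<^bold>F)) \<^bold>\<or> \<^bold>T"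
    using mixed_disj.IH(1)[OF mixed_disj.prems(1) RB(1)] by blast
  have "((cls (LOr A B) \<^bold>\<and> cls P) \<^bold>\<or> (cls W \<^bold>\<and> \<^bold>F)) \<^bold>\<or> \<^bold>T
      = (cls A \<^bold>\<and> cls P) \<^bold>\<or> ((cls B \<^bold>\<and> cls P) \<^bold>\<or> (cls W \<^bold>\<and> \<^bold>F)) \<^bold>\<or> \<^bold>T"
    by (simp only: cls.simps qor_assoc
        true_class_qand_qor_distrib[OF true_class_T_form[OF mixed_disj.prems(1)]])
  also have "\<dots> = (cls A \<^bold>\<and> cls P) \<^bold>\<or> cls RB"
    by (simp only: RB(2))
  also have "\<dots> = (cls A \<^bold>\<and> cls P) \<^bold>\<or> (cls RB \<^bold>\<and> \<^bold>F) \<^bold>\<or> \<^bold>T"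
    using true_class_T_form[OF RB(1)] qor_qtrue_eq[of "cls RB"] unfolding true_class_def by metis
  also have "\<dots> = ((cls A \<^bold>\<and> cls P) \<^bold>\<or> (cls RB \<^bold>\<and> \<^bold>F)) \<^bold>\<or> \<^bold>T"
    by (simp only: qor_assoc)
  finally show ?case using RA by auto
qed

lemma mixed_form_qor_qtrue: "mixed_form k M \<Longrightarrow> \<exists>R. T_form R \<and> cls R = cls M \<^bold>\<or> \<^bold>T"
  using mixed_form_qor_qtrue_general[of k M Tt Tt]
  by (simp add: qand_qtrue qtrue_qand qor_qfalse T_form.intros)

lemma mixed_form_qand:
  "mixed_form k A \<Longrightarrow> mixed_form k' B \<Longrightarrow> \<exists>M. mixed_form Conj M \<and> cls M = cls A \<^bold>\<and> cls B"
proof (induction arbitrary: B k' rule: mixed_form.induct)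
  case (mixed_lit L)
  then show ?case by (intro exI[of _ "LAnd L B"]) (auto intro: mixed_form.intros)
next
  case (mixed_conj k A1 k2 A2)
  obtain M where "mixed_form Conj M" "cls M = cls A2 \<^bold>\<and> cls B"
    using mixed_conj.IH(2)[OF mixed_conj.prems] by blast
  then show ?case using mixed_conj
    by (intro exI[of _ "LAnd A1 M"]) (auto simp: qand_assoc intro: mixed_form.intros)
next
  case (mixed_disj k A1 k2 A2)
  then show ?case by (intro exI[of _ "LAnd (LOr A1 A2) B"]) (auto intro: mixed_form.intros)
qed

lemma normal_form_qneg:
  assumes "normal_form t"
  shows "\<exists>c. normal_form c \<and> cls c = \<^bold>\<not> cls t"
  using assms
proof (cases rule: normal_form_cases)
  case T
  then show ?thesis using true_class_qneg[OF true_class_T_form[OF T]]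
    by (intro exI[of _ "LAnd t Ff"]) (auto simp: normal_form_def)
next
  case (F P)
  then show ?thesis using true_class_qneg_qand_qfalse[OF true_class_T_form[OF F(2)]]
    by (intro exI[of _ P]) (auto simp: normal_form_def)
next
  case (M P N k)
  note P = true_class_T_form[OF M(2)]
  obtain N' where N': "mixed_form (dual_shape k) N'" "cls N' = \<^bold>\<not> cls N"
    using mixed_form_qneg[OF M(3)] by blast
  have "\<^bold>\<not> cls t = (cls P \<^bold>\<and> \<^bold>F) \<^bold>\<or> \<^bold>\<not> cls N"
    by (simp add: M qneg_qand true_class_qneg[OF P])
  also have "\<dots> = cls P \<^bold>\<and> cls N'"
    by (simp add: true_class_qand_qfalse_qor[OF P] N')
  finally show ?thesis using M N' by (intro exI[of _ "LAnd P N'"]) (auto simp: normal_form_def)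
qed

lemma T_form_qand_normal_form:
  assumes "T_form P" and "normal_form u"
  shows "\<exists>c. normal_form c \<and> cls c = cls P \<^bold>\<and> cls u"
  using assms(2)
proof (cases rule: normal_form_cases)
  case T
  then show ?thesis using T_form_qand[OF assms(1)] by (auto simp: normal_form_def)
next
  case (F Q)
  obtain R where "T_form R" "cls R = cls P \<^bold>\<and> cls Q" using T_form_qand[OF assms(1) F(2)] by blast
  then show ?thesis using F by (intro exI[of _ "LAnd R Ff"]) (auto simp: normal_form_def qand_assoc)
next
  case (M Q N k)
  obtain R where "T_form R" "cls R = cls P \<^bold>\<and> cls Q" using T_form_qand[OF assms(1) M(2)] by blast
  then show ?thesis using M by (intro exI[of _ "LAnd R N"]) (auto simp: normal_form_def qand_assoc)
qed

lemma mixed_normal_form_qand_normal_form: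
  assumes "T_form P" and "mixed_form k N" and "normal_form u"
  shows "\<exists>c. normal_form c \<and> cls c = (cls P \<^bold>\<and> cls N) \<^bold>\<and> cls u"
  using assms(3)
proof (cases rule: normal_form_cases)
  case T
  obtain N' where "mixed_form k N'" "cls N' = cls N \<^bold>\<and> cls u"
    using mixed_form_qand_T_form[OF assms(2) T] by blast
  then show ?thesis
    using assms(1) by (intro exI[of _ "LAnd P N'"]) (auto simp: normal_form_def qand_assoc)
next
  case (F Q)
  obtain N' where N': "mixed_form k N'" "cls N' = cls N \<^bold>\<and> cls Q"
    using mixed_form_qand_T_form[OF assms(2) F(2)] by blast
  obtain R where R: "T_form R" "cls R = cls N' \<^bold>\<or> \<^bold>T"
    using mixed_form_qor_qtrue[OF N'(1)] by blast
  obtain S where S: "T_form S" "cls S = cls P \<^bold>\<and> cls R"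
    using T_form_qand[OF assms(1) R(1)] by blast
  have "(cls P \<^bold>\<and> cls N) \<^bold>\<and> cls u = cls P \<^bold>\<and> cls N' \<^bold>\<and> \<^bold>F"
    by (simp add: F N' qand_assoc)
  also have "\<dots> = cls S \<^bold>\<and> \<^bold>F"
    by (subst qand_qfalse_eq) (simp add: R S qand_assoc)
  finally show ?thesis using S by (intro exI[of _ "LAnd S Ff"]) (auto simp: normal_form_def)
next
  case (M Q N2 k2)
  obtain N' where N': "mixed_form k N'" "cls N' = cls N \<^bold>\<and> cls Q"
    using mixed_form_qand_T_form[OF assms(2) M(2)] by blast
  obtain N3 where N3: "mixed_form Conj N3" "cls N3 = cls N' \<^bold>\<and> cls N2"
    using mixed_form_qand[OF N'(1) M(3)] by blast
  have "(cls P \<^bold>\<and> cls N) \<^bold>\<and> cls u = cls P \<^bold>\<and> cls N3"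
    by (simp add: M N' N3 qand_assoc)
  then show ?thesis using assms(1) N3 by (intro exI[of _ "LAnd P N3"]) (auto simp: normal_form_def)
qed

lemma normal_form_qand:
  assumes "normal_form t" and "normal_form u"
  shows "\<exists>c. normal_form c \<and> cls c = cls t \<^bold>\<and> cls u"
  using assms(1)
proof (cases rule: normal_form_cases)
  case T
  then show ?thesis using T_form_qand_normal_form[OF T assms(2)] by blast
next
  case (F P)
  then show ?thesis using assms(1) by (intro exI[of _ t]) (auto simp: qand_qfalse_qand)
next
  case (M P N k)
  then show ?thesis using mixed_normal_form_qand_normal_form[OF M(2,3) assms(2)] by simp
qed

lemma normal_form_exists: "scl_term t \<Longrightarrow> closed t \<Longrightarrow> \<exists>c. normal_form c \<and> cls c = cls t"
proof (induction t)
  case Tt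
  then show ?case by (intro exI[of _ Tt]) (auto simp: normal_form_def T_form.intros)
next
  case Ff
  then show ?case
    by (intro exI[of _ "LAnd Tt Ff"]) (auto simp: normal_form_def T_form.intros qtrue_qand)
next
  case (At a)
  have "mixed_form Lit (LOr (LAnd (At a) Tt) (LAnd Tt Ff))"
    by (auto intro: mixed_form.intros literal.intros T_form.intros)
  then show ?case
    by (intro exI[of _ "LAnd Tt (LOr (LAnd (At a) Tt) (LAnd Tt Ff))"])
      (auto simp: normal_form_def T_form.intros qtrue_qand qand_qtrue qor_qfalse)
next
  case (Neg t)
  then show ?case using normal_form_qneg by fastforce
next
  case (LAnd t u)
  then show ?case using normal_form_qand by fastforce
next
  case (LOr t u)
  then obtain c d where c: "normal_form c" "cls c = cls t" and d: "normal_form d" "cls d = cls u"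
    by auto
  obtain c' where c': "normal_form c'" "cls c' = \<^bold>\<not> cls c" using normal_form_qneg[OF c(1)] by blast
  obtain d' where d': "normal_form d'" "cls d' = \<^bold>\<not> cls d" using normal_form_qneg[OF d(1)] by blast
  obtain e where e: "normal_form e" "cls e = cls c' \<^bold>\<and> cls d'"
    using normal_form_qand[OF c'(1) d'(1)] by blast
  obtain e' where e': "normal_form e'" "cls e' = \<^bold>\<not> cls e" using normal_form_qneg[OF e(1)] by blast
  show ?case using c d c' d' e e' by (intro exI[of _ e']) (simp add: qor_def_axiom)
qed auto

section \<open>Decision trees under conjunction and disjunction\<close>

primrec has_T :: "'a dtree \<Rightarrow> bool" where
  "has_T (Leaf b) = b"
| "has_T (Node a l r) = (has_T l \<or> has_T r)"

primrec has_F :: "'a dtree \<Rightarrow> bool" where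
  "has_F (Leaf b) = (\<not> b)"
| "has_F (Node a l r) = (has_F l \<or> has_F r)"

definition mixed :: "'a dtree \<Rightarrow> bool" where
  "mixed X \<longleftrightarrow> has_T X \<and> has_F X"

lemma has_T_or_has_F: "has_T X \<or> has_F X"
  by (induction X) auto

lemma has_T_graft: "has_T (graft X A B) \<longleftrightarrow> (has_T X \<and> has_T A) \<or> (has_F X \<and> has_T B)"
  by (induction X) auto

lemma has_F_graft: "has_F (graft X A B) \<longleftrightarrow> (has_T X \<and> has_F A) \<or> (has_F X \<and> has_F B)"
  by (induction X) auto

lemma has_T_tconj [simp]: "has_T (tconj X Y) \<longleftrightarrow> has_T X \<and> has_T Y"
  by (simp add: tconj_def has_T_graft)

lemma has_F_tconj [simp]: "has_F (tconj X Y) \<longleftrightarrow> has_F X \<or> (has_T X \<and> has_F Y)"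
  by (auto simp add: tconj_def has_F_graft)

lemma has_T_tdisj [simp]: "has_T (tdisj X Y) \<longleftrightarrow> has_T X \<or> (has_F X \<and> has_T Y)"
  by (auto simp add: tdisj_def has_T_graft)

lemma has_F_tdisj [simp]: "has_F (tdisj X Y) \<longleftrightarrow> has_F X \<and> has_F Y"
  by (simp add: tdisj_def has_F_graft)

lemma has_T_tneg [simp]: "has_T (tneg X) = has_F X"
  by (simp add: tneg_def has_T_graft)

lemma has_F_tneg [simp]: "has_F (tneg X) = has_T X"
  by (simp add: tneg_def has_F_graft)

lemma mixed_tneg [simp]: "mixed (tneg X) = mixed X"
  by (auto simp: mixed_def)

lemma mixed_tconj: "mixed A \<Longrightarrow> mixed B \<Longrightarrow> mixed (tconj A B)"
  by (auto simp: mixed_def)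

lemma mixed_tdisj: "mixed A \<Longrightarrow> mixed B \<Longrightarrow> mixed (tdisj A B)"
  by (auto simp: mixed_def)

lemma graft_no_F: "\<not> has_F X \<Longrightarrow> graft X A B = graft X A C"
  by (induction X) auto

lemma graft_no_T: "\<not> has_T X \<Longrightarrow> graft X A B = graft X C B"
  by (induction X) auto

lemma tconj_Leaf_True_right [simp]: "tconj X (Leaf True) = X"
  by (simp add: tconj_def)

lemma tconj_Leaf_True [simp]: "tconj (Leaf True) Y = Y"
  by (simp add: tconj_def)

lemma tconj_Leaf_False [simp]: "tconj (Leaf False) Y = Leaf False"
  by (simp add: tconj_def)

lemma tconj_Node [simp]: "tconj (Node a l r) Y = Node a (tconj l Y) (tconj r Y)"
  by (simp add: tconj_def)

lemma tdisj_Leaf_False [simp]: "tdisj (Leaf False) Y = Y"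
  by (simp add: tdisj_def)

lemma tdisj_Node [simp]: "tdisj (Node a l r) Y = Node a (tdisj l Y) (tdisj r Y)"
  by (simp add: tdisj_def)

lemma tconj_assoc: "tconj (tconj X Y) Z = tconj X (tconj Y Z)"
  by (simp add: tconj_def graft_assoc)

lemma tneg_tneg [simp]: "tneg (tneg X) = X"
  by (simp add: tneg_def graft_assoc)

lemma tneg_tconj: "tneg (tconj X Y) = tdisj (tneg X) (tneg Y)"
  by (simp add: tneg_def tconj_def tdisj_def graft_assoc)

lemma tneg_tdisj: "tneg (tdisj X Y) = tconj (tneg X) (tneg Y)"
  by (simp add: tneg_def tconj_def tdisj_def graft_assoc)

lemma size_tneg [simp]: "size (tneg X) = size X"
  by (induction X) (auto simp: tneg_def)

lemma tconj_no_T: "\<not> has_T X \<Longrightarrow> tconj X Y = X"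
  unfolding tconj_def by (induction X) auto

lemma tdisj_no_F: "\<not> has_F X \<Longrightarrow> tdisj X Y = X"
  unfolding tdisj_def by (induction X) auto

lemma tdisj_no_T: "\<not> has_T X \<Longrightarrow> tdisj X Y = tconj (tneg X) Y"
  unfolding tdisj_def tconj_def tneg_def by (simp add: graft_assoc graft_no_T[of X _ Y])

lemma tneg_tconj_no_F: "\<not> has_F X \<Longrightarrow> tneg (tconj X Y) = tconj X (tneg Y)"
  unfolding tneg_def tconj_def by (simp add: graft_assoc graft_no_F[of X _ "Leaf True"])

lemma tconj_eq_tconj_factor:
  assumes "has_T A" "has_T C" "has_T B" "has_T D" "tconj A B = tconj C D"
  shows "(\<exists>E. B = tconj E D) \<or> (\<exists>E. D = tconj E B)"
  using assms
proof (induction A arbitrary: C)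
  case (Leaf b)
  then show ?case by auto
next
  case (Node a A1 A2)
  show ?case
  proof (cases C)
    case (Leaf c)
    then have "D = tconj (Node a A1 A2) B" using Node.prems by (cases c) auto
    then show ?thesis by blast
  next
    case (Node c C1 C2)
    with Node.prems have e1: "tconj A1 B = tconj C1 D" and e2: "tconj A2 B = tconj C2 D" by auto
    show ?thesis
    proof (cases "has_T A1")
      case True
      then have "has_T C1" using e1 Node.prems by (metis has_T_tconj tconj_no_T)
      then show ?thesis using Node.IH(1)[OF True _ Node.prems(3,4) e1] by blast
    next
      case False
      then have A2: "has_T A2" using Node.prems by auto
      then have "has_T C2" using e2 Node.prems by (metis has_T_tconj tconj_no_T)
      then show ?thesis using Node.IH(2)[OF A2 _ Node.prems(3,4) e2] by blast
    qed
  qed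
qed

lemma size_tconj_ge: "has_T X \<Longrightarrow> size (tconj X B) \<ge> size B"
  by (induction X) auto

lemma size_tconj_gt: "has_T X \<Longrightarrow> X \<noteq> Leaf True \<Longrightarrow> size (tconj X B) > size B"
  by (cases X) (auto dest: size_tconj_ge[of _ B])

lemma tconj_eq_right_self: "has_T B \<Longrightarrow> B = tconj C B \<Longrightarrow> C = Leaf True"
  by (metis has_T_tconj less_not_refl size_tconj_gt)

lemma tconj_cancel_right: "has_T B \<Longrightarrow> tconj A B = tconj C B \<Longrightarrow> A = C"
proof (induction A arbitrary: C)
  case (Leaf b)
  show ?case
  proof (cases b)
    case True
    then show ?thesis using Leaf tconj_eq_right_self by fastforce
  next
    case False
    then show ?thesis using Leaf.prems by (cases C) (auto simp: tconj_def split: if_splits)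
  qed
next
  case (Node a A1 A2)
  show ?case
  proof (cases C)
    case (Leaf c)
    then show ?thesis using Node.prems tconj_eq_right_self[of B "Node a A1 A2"] by (cases c) auto
  next
    case (Node c C1 C2)
    then show ?thesis using Node.prems Node.IH by auto
  qed
qed

lemma tconj_eq_tdisj_size_less:
  assumes eq: "tconj A B = tdisj C D" and A: "mixed A" and C: "\<not> has_T C"
    and B: "mixed B" and D: "mixed D"
  shows "size B < size D"
proof -
  have eq': "tconj A B = tconj (tneg C) D" using eq tdisj_no_T[OF C] by simp
  have "has_T (tneg C)" using C has_T_or_has_F[of C] by simp
  with tconj_eq_tconj_factor[OF _ _ _ _ eq'] A B D
  consider (left) E where "B = tconj E D" | (right) E where "D = tconj E B"
    by (auto simp: mixed_def)
  then show ?thesis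
  proof cases
    case left
    then have "tconj (tconj A E) D = tconj (tneg C) D" using eq' by (simp add: tconj_assoc)
    then have "tconj A E = tneg C" using tconj_cancel_right D by (auto simp: mixed_def)
    then show ?thesis using A C unfolding mixed_def by (metis has_F_tconj has_F_tneg)
  next
    case right
    show ?thesis
    proof (cases "E = Leaf True")
      case True
      then have "A = tneg C" using eq' right tconj_cancel_right B by (auto simp: mixed_def)
      then show ?thesis using A C by (simp add: mixed_def)
    next
      case False
      have "has_T E" using right D by (auto simp: mixed_def)
      then show ?thesis using size_tconj_gt[OF _ False] right by auto
    qed
  qed
qed

lemma tconj_eq_tdisj_size_greater:
  assumes "tconj A B = tdisj C D" and "\<not> has_F A" and "mixed C" "mixed B" "mixed D"
  shows "size D < size B"
proof -
  have "tconj (tneg C) (tneg D) = tdisj (tneg A) (tneg B)"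
    by (metis assms(1) tneg_tdisj tneg_tconj)
  then have "size (tneg D) < size (tneg B)"
    by (rule tconj_eq_tdisj_size_less) (use assms in \<open>auto simp: mixed_def\<close>)
  then show ?thesis by simp
qed

text \<open>An \<open>F\<close>-leaf of \<open>A\<close> and a \<open>T\<close>-leaf of \<open>C\<close> lead, via the two lemmas above, to opposite
  strict inequalities between the sizes of \<open>B\<close> and \<open>D\<close>.\<close>

lemma tconj_neq_tdisj_mixed:
  "mixed A \<Longrightarrow> mixed B \<Longrightarrow> mixed C \<Longrightarrow> mixed D \<Longrightarrow> tconj A B \<noteq> tdisj C D"
proof (induction A arbitrary: C)
  case (Leaf b)
  then show ?case by (cases b) (auto simp: mixed_def)
next
  case (Node a A1 A2)
  show ?case
  proof (cases C)
    case (Leaf c)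
    then show ?thesis using Node.prems by (cases c) (auto simp: mixed_def)
  next
    case (Node c C1 C2)
    show ?thesis
    proof
      assume "tconj (Node a A1 A2) B = tdisj C D"
      with Node have e1: "tconj A1 B = tdisj C1 D" and e2: "tconj A2 B = tdisj C2 D" by auto
      have tA: "has_T A1" "has_T A2"
        using e1 e2 Node.prems has_T_or_has_F[of C1] has_T_or_has_F[of C2]
        by (metis has_T_tdisj tconj_no_T mixed_def)+
      have fC: "has_F C1" "has_F C2"
        using e1 e2 Node.prems tA has_T_or_has_F[of A1] has_T_or_has_F[of A2]
        by (metis has_F_tconj tdisj_no_F mixed_def)+
      have sizes: "(has_F A' \<longrightarrow> size B < size D) \<and> (has_T C' \<longrightarrow> size D < size B)"
        if e: "tconj A' B = tdisj C' D" and "has_T A'" "has_F C'"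
          and IH: "mixed A' \<Longrightarrow> mixed C' \<Longrightarrow> False" for A' C'
        using that tconj_eq_tdisj_size_less[OF e] tconj_eq_tdisj_size_greater[OF e] Node.prems
        by (auto simp: mixed_def)
      have "has_F A1 \<or> has_F A2" "has_T C1 \<or> has_T C2"
        using Node.prems \<open>C = Node c C1 C2\<close> by (auto simp: mixed_def)
      then show False
        using sizes[OF e1 tA(1) fC(1)] sizes[OF e2 tA(2) fC(2)]
          Node.IH(1)[OF _ Node.prems(2) _ Node.prems(4)]
          Node.IH(2)[OF _ Node.prems(2) _ Node.prems(4)] e1 e2
        by fastforce
    qed
  qed
qed

definition conj_tree :: "'a dtree \<Rightarrow> bool" where
  "conj_tree X \<longleftrightarrow> (\<exists>A B. mixed A \<and> mixed B \<and> X = tconj A B)"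

definition disj_tree :: "'a dtree \<Rightarrow> bool" where
  "disj_tree X \<longleftrightarrow> (\<exists>A B. mixed A \<and> mixed B \<and> X = tdisj A B)"

definition T_prefix_free :: "'a dtree \<Rightarrow> bool" where
  "T_prefix_free X \<longleftrightarrow> \<not> (\<exists>P Z. \<not> has_F P \<and> P \<noteq> Leaf True \<and> X = tconj P Z)"

definition literal_tree :: "'a dtree \<Rightarrow> bool" where
  "literal_tree X \<longleftrightarrow> (\<exists>a R Q. \<not> has_F R \<and> \<not> has_T Q \<and> (X = Node a R Q \<or> X = Node a Q R))"

lemma literal_tree_mixed: "literal_tree X \<Longrightarrow> mixed X"
  unfolding literal_tree_def mixed_def using has_T_or_has_F by fastforce

lemma literal_tree_not_conj_tree: "literal_tree X \<Longrightarrow> \<not> conj_tree X"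
proof
  assume "literal_tree X" "conj_tree X"
  then obtain a R Q A B where RQ: "\<not> has_F R" "\<not> has_T Q" "X = Node a R Q \<or> X = Node a Q R"
    and AB: "mixed A" "mixed B" "X = tconj A B"
    unfolding literal_tree_def conj_tree_def by blast
  obtain b A1 A2 where A: "A = Node b A1 A2" using AB by (cases A) (auto simp: mixed_def)
  have "has_T A1 \<or> has_T A2" using AB A by (auto simp: mixed_def)
  then show False using RQ AB A by (auto simp: mixed_def)
qed

lemma literal_tree_not_disj_tree: "literal_tree X \<Longrightarrow> \<not> disj_tree X"
proof
  assume "literal_tree X" "disj_tree X"
  then obtain a R Q A B where RQ: "\<not> has_F R" "\<not> has_T Q" "X = Node a R Q \<or> X = Node a Q R"
    and AB: "mixed A" "mixed B" "X = tdisj A B"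
    unfolding literal_tree_def disj_tree_def by blast
  obtain b A1 A2 where A: "A = Node b A1 A2" using AB by (cases A) (auto simp: mixed_def)
  have "has_F A1 \<or> has_F A2" using AB A by (auto simp: mixed_def)
  then show False using RQ AB A by (auto simp: mixed_def)
qed

lemma literal_tree_T_prefix_free: "literal_tree X \<Longrightarrow> T_prefix_free X"
proof (unfold T_prefix_free_def, rule notI)
  assume "literal_tree X" "\<exists>P Z. \<not> has_F P \<and> P \<noteq> Leaf True \<and> X = tconj P Z"
  then obtain a R Q P Z where RQ: "\<not> has_F R" "\<not> has_T Q" "X = Node a R Q \<or> X = Node a Q R"
    and P: "\<not> has_F P" "P \<noteq> Leaf True" "X = tconj P Z"
    unfolding literal_tree_def by blast
  obtain b P1 P2 where P': "P = Node b P1 P2" using P by (cases P) auto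
  have "has_T P1" "has_T P2" using P P' has_T_or_has_F[of P1] has_T_or_has_F[of P2] by auto
  then show False using RQ P P' has_T_or_has_F[of Z] by auto
qed

lemma T_prefix_free_tconj:
  assumes A: "mixed A" "T_prefix_free A" and B: "has_T B"
  shows "T_prefix_free (tconj A B)"
proof (unfold T_prefix_free_def, rule notI)
  assume "\<exists>P Z. \<not> has_F P \<and> P \<noteq> Leaf True \<and> tconj A B = tconj P Z"
  then obtain P Z where P: "\<not> has_F P" "P \<noteq> Leaf True" "tconj A B = tconj P Z" by blast
  have "has_T P" using P has_T_or_has_F[of P] by auto
  moreover have Z: "has_T Z" using P A B by (metis has_T_tconj mixed_def)
  ultimately consider (left) E where "B = tconj E Z" | (right) E where "Z = tconj E B"
    using tconj_eq_tconj_factor[OF _ _ B Z P(3)] A by (auto simp: mixed_def)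
  then show False
  proof cases
    case left
    then have "tconj (tconj A E) Z = tconj P Z" using P by (simp add: tconj_assoc)
    then have "tconj A E = P" using tconj_cancel_right Z by blast
    then show False using A P by (auto simp: mixed_def)
  next
    case right
    then have "tconj A B = tconj (tconj P E) B" using P by (simp add: tconj_assoc)
    then have "A = tconj P E" using tconj_cancel_right B by blast
    then show False using A P unfolding T_prefix_free_def by blast
  qed
qed

lemma T_prefix_free_tneg: "T_prefix_free (tneg X) \<longleftrightarrow> T_prefix_free X"
  unfolding T_prefix_free_def by (metis tneg_tconj_no_F tneg_tneg)

lemma T_prefix_free_tdisj: "mixed A \<Longrightarrow> T_prefix_free A \<Longrightarrow> has_F B \<Longrightarrow> T_prefix_free (tdisj A B)"
  by (metis has_T_tneg mixed_tneg T_prefix_free_tconj T_prefix_free_tneg tneg_tdisj)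

lemma conj_tree_tneg: "conj_tree (tneg X) \<longleftrightarrow> disj_tree X"
  unfolding conj_tree_def disj_tree_def by (metis mixed_tneg tneg_tdisj tneg_tconj tneg_tneg)

lemma tconj_mixed_unique_aux:
  assumes eq: "tconj A B = tconj A' B'" and E: "B = tconj E B'"
    and m: "mixed A" "mixed A'" "mixed B" "mixed B'"
    and "\<not> conj_tree A'" and "T_prefix_free B"
  shows "A = A' \<and> B = B'"
proof -
  have "tconj (tconj A E) B' = tconj A' B'" using eq E by (simp add: tconj_assoc)
  then have A': "A' = tconj A E" using tconj_cancel_right m by (auto simp: mixed_def)
  consider "E = Leaf True" | "\<not> has_T E" | "\<not> has_F E" "E \<noteq> Leaf True" | "mixed E"
    by (auto simp: mixed_def)
  then show ?thesis
  proof cases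
    case 1
    then show ?thesis using A' E by simp
  next
    case 2
    then show ?thesis using E m tconj_no_T by (metis mixed_def)
  next
    case 3
    then show ?thesis using assms(8) E unfolding T_prefix_free_def by blast
  next
    case 4
    then show ?thesis using assms(7) A' m unfolding conj_tree_def by blast
  qed
qed

lemma tconj_mixed_unique:
  assumes "tconj A B = tconj A' B'" and "mixed A" "mixed A'" "mixed B" "mixed B'"
    and "\<not> conj_tree A" "\<not> conj_tree A'" and "T_prefix_free B" "T_prefix_free B'"
  shows "A = A' \<and> B = B'"
proof -
  consider (left) E where "B = tconj E B'" | (right) E where "B' = tconj E B"
    using tconj_eq_tconj_factor[OF _ _ _ _ assms(1)] assms(2-5) by (auto simp: mixed_def)
  then show ?thesis
  proof cases
    case left
    show ?thesis using tconj_mixed_unique_aux[OF assms(1) left assms(2-5,7,8)] .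
  next
    case right
    show ?thesis
      using tconj_mixed_unique_aux[OF assms(1)[symmetric] right assms(3,2,5,4,6,9)] by simp
  qed
qed

lemma tdisj_mixed_unique:
  assumes "tdisj A B = tdisj A' B'" and "mixed A" "mixed A'" "mixed B" "mixed B'"
    and "\<not> disj_tree A" "\<not> disj_tree A'" and "T_prefix_free B" "T_prefix_free B'"
  shows "A = A' \<and> B = B'"
proof -
  have "tconj (tneg A) (tneg B) = tconj (tneg A') (tneg B')" by (metis assms(1) tneg_tdisj)
  then have "tneg A = tneg A' \<and> tneg B = tneg B'"
    by (rule tconj_mixed_unique) (use assms in \<open>simp_all add: conj_tree_tneg T_prefix_free_tneg\<close>)
  then show ?thesis by (metis tneg_tneg)
qed

lemma tconj_T_prefix_unique:
  "\<not> has_F P \<Longrightarrow> \<not> has_F P' \<Longrightarrow> T_prefix_free Z \<Longrightarrow> T_prefix_free Z'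
    \<Longrightarrow> tconj P Z = tconj P' Z' \<Longrightarrow> P = P' \<and> Z = Z'"
proof (induction P arbitrary: P')
  case (Leaf b)
  then have b: "b" by simp
  show ?case
  proof (cases P')
    case (Leaf c)
    then show ?thesis using Leaf.prems b by auto
  next
    case (Node c l r)
    have "Z = tconj P' Z'" using Leaf.prems b by simp
    then show ?thesis using Leaf.prems(2,3) Node unfolding T_prefix_free_def by blast
  qed
next
  case (Node a l r)
  show ?case
  proof (cases P')
    case (Leaf c)
    with Node.prems have "Z' = tconj (Node a l r) Z" by (cases c) auto
    then show ?thesis using Node.prems(1,4) unfolding T_prefix_free_def by blast
  next
    case (Node c l' r')
    then show ?thesis using Node.prems Node.IH by auto
  qed
qed

lemma tconj_Leaf_False_inj:
  "\<not> has_F P \<Longrightarrow> \<not> has_F P' \<Longrightarrow> tconj P (Leaf False) = tconj P' (Leaf False) \<Longrightarrow> P = P'"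
proof (induction P arbitrary: P')
  case (Leaf b)
  then show ?case by (cases P') auto
next
  case (Node a l r)
  then show ?case by (cases P') auto
qed

section \<open>Normal forms are determined by their trees\<close>

abbreviation tree_of :: "'a trm \<Rightarrow> 'a dtree" where
  "tree_of \<equiv> den (\<lambda>_. Leaf True)"

lemma T_form_no_F: "T_form P \<Longrightarrow> \<not> has_F (tree_of P)"
  by (induction rule: T_form.induct) (simp_all add: tdisj_no_F)

lemma tree_of_T_form_At:
  "T_form P \<Longrightarrow> tree_of (LOr (LAnd (At a) P) Q) = Node a (tree_of P) (tree_of Q)"
  using T_form_no_F[of P] by (simp add: tdisj_no_F)

lemma T_form_tree_of_inj: "T_form P \<Longrightarrow> T_form Q \<Longrightarrow> tree_of P = tree_of Q \<Longrightarrow> P = Q"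
proof (induction arbitrary: Q rule: T_form.induct)
  case T_form_Tt
  from T_form_Tt.prems show ?case by (cases rule: T_form.cases) (auto simp: tree_of_T_form_At)
next
  case (T_form_At P1 P2 a)
  from T_form_At.prems(1) show ?case
  proof (cases rule: T_form.cases)
    case T_form_Tt
    then show ?thesis using T_form_At by (simp add: tree_of_T_form_At)
  next
    case (T_form_At Q1 Q2 b)
    then show ?thesis
      using T_form_At.IH T_form_At.hyps T_form_At.prems T_form_no_F[of P1] T_form_no_F[of Q1]
      by (simp add: tdisj_no_F)
  qed
qed

lemma tree_of_literal:
  assumes "literal L"
  obtains a R Q where "T_form R" "T_form Q" "L = LOr (LAnd (At a) R) (LAnd Q Ff)"
    "tree_of L = Node a (tree_of R) (tconj (tree_of Q) (Leaf False))"
  | a R Q where "T_form R" "T_form Q" "L = LOr (LAnd (Neg (At a)) R) (LAnd Q Ff)"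
    "tree_of L = Node a (tconj (tree_of Q) (Leaf False)) (tree_of R)"
  using assms
proof (cases rule: literal.cases)
  case (literal_pos R Q a)
  then show ?thesis using that(1) T_form_no_F[of R] by (simp add: tdisj_no_F)
next
  case (literal_neg R Q a)
  then show ?thesis using that(2) T_form_no_F[of R] by (simp add: tdisj_no_F tneg_def)
qed

lemma literal_tree_tree_of:
  assumes "literal L"
  shows "literal_tree (tree_of L)"
  using assms
proof (cases rule: tree_of_literal)
  case (1 a R Q)
  then show ?thesis unfolding literal_tree_def 1(4) using T_form_no_F[OF 1(1)]
    by (intro exI[of _ a] exI[of _ "tree_of R"] exI[of _ "tconj (tree_of Q) (Leaf False)"]) simp
next
  case (2 a R Q)
  then show ?thesis unfolding literal_tree_def 2(4) using T_form_no_F[OF 2(1)]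
    by (intro exI[of _ a] exI[of _ "tree_of R"] exI[of _ "tconj (tree_of Q) (Leaf False)"]) simp
qed

lemma literal_tree_of_inj:
  assumes "literal L" and "literal L'" and eq: "tree_of L = tree_of L'"
  shows "L = L'"
proof -
  have F_branch: "has_F (tconj (tree_of Q) (Leaf False))" if "T_form Q" for Q :: "'a trm"
    using has_T_or_has_F[of "tree_of Q"] T_form_no_F[OF that] by simp
  have inj: "R = R' \<and> Q = Q'"
    if "T_form R" "T_form Q" "T_form R'" "T_form Q'" "tree_of R = tree_of R'"
      "tconj (tree_of Q) (Leaf False) = tconj (tree_of Q') (Leaf False)" for R Q R' Q' :: "'a trm"
    using that T_form_tree_of_inj tconj_Leaf_False_inj[OF T_form_no_F T_form_no_F] by blast
  from assms(1) show ?thesis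
  proof (cases rule: tree_of_literal)
    case L: (1 a R Q)
    from assms(2) show ?thesis
    proof (cases rule: tree_of_literal)
      case (1 b R' Q')
      then have "a = b" "R = R'" "Q = Q'" using L eq inj[of R Q R' Q'] by auto
      then show ?thesis using L(3) 1(3) by simp
    next
      case (2 b R' Q')
      then have "tree_of R = tconj (tree_of Q') (Leaf False)" using L eq by simp
      then show ?thesis using F_branch[OF 2(2)] T_form_no_F[OF L(1)] by simp
    qed
  next
    case L: (2 a R Q)
    from assms(2) show ?thesis
    proof (cases rule: tree_of_literal)
      case (1 b R' Q')
      then have "tree_of R' = tconj (tree_of Q) (Leaf False)" using L eq by simp
      then show ?thesis using F_branch[OF L(2)] T_form_no_F[OF 1(1)] by simp
    next
      case (2 b R' Q')
      then have "a = b" "R = R'" "Q = Q'" using L eq inj[of R Q R' Q'] by auto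
      then show ?thesis using L(3) 2(3) by simp
    qed
  qed
qed

lemma tree_of_mixed_form:
  "mixed_form k M \<Longrightarrow> mixed (tree_of M) \<and> T_prefix_free (tree_of M)
     \<and> (conj_tree (tree_of M) \<longleftrightarrow> k = Conj) \<and> (disj_tree (tree_of M) \<longleftrightarrow> k = Disj)"
proof (induction rule: mixed_form.induct)
  case (mixed_lit L)
  then show ?case
    using literal_tree_tree_of[OF mixed_lit] literal_tree_mixed literal_tree_T_prefix_free
      literal_tree_not_conj_tree literal_tree_not_disj_tree
    by blast
next
  case (mixed_conj k A k' B)
  then have "mixed (tree_of A)" "mixed (tree_of B)" "T_prefix_free (tree_of A)" by auto
  then show ?case
    using tconj_neq_tdisj_mixed
    by (auto simp: mixed_tconj T_prefix_free_tconj mixed_def conj_tree_def disj_tree_def)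
next
  case (mixed_disj k A k' B)
  then have AB: "mixed (tree_of A)" "mixed (tree_of B)" "T_prefix_free (tree_of A)" by auto
  then have "\<not> conj_tree (tree_of (LOr A B))"
    using tconj_neq_tdisj_mixed unfolding conj_tree_def by (metis den.simps(7))
  then show ?case
    using AB by (auto simp: mixed_tdisj T_prefix_free_tdisj mixed_def disj_tree_def)
qed

lemma mixed_form_shape_unique:
  "mixed_form k M \<Longrightarrow> mixed_form k' M' \<Longrightarrow> tree_of M = tree_of M' \<Longrightarrow> k = k'"
  using tree_of_mixed_form[of k M] tree_of_mixed_form[of k' M'] by (cases k; cases k') auto

lemma mixed_form_tree_of_inj:
  "mixed_form k M \<Longrightarrow> mixed_form k' M' \<Longrightarrow> tree_of M = tree_of M' \<Longrightarrow> M = M'"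
proof (induction arbitrary: k' M' rule: mixed_form.induct)
  case (mixed_lit L)
  then have "k' = Lit" using mixed_form_shape_unique mixed_form.mixed_lit by metis
  with mixed_lit.prems(1) have "literal M'" by (cases rule: mixed_form.cases) auto
  then show ?case using literal_tree_of_inj mixed_lit by blast
next
  case (mixed_conj k A k2 B)
  then have "k' = Conj" using mixed_form_shape_unique mixed_form.mixed_conj by metis
  with mixed_conj.prems(1) obtain k1 A' k3 B' where M': "M' = LAnd A' B'"
    "mixed_form k1 A'" "k1 \<noteq> Conj" "mixed_form k3 B'"
    by (cases rule: mixed_form.cases) auto
  have "tree_of A = tree_of A' \<and> tree_of B = tree_of B'"
    by (rule tconj_mixed_unique)
      (use tree_of_mixed_form[OF mixed_conj.hyps(1)] tree_of_mixed_form[OF mixed_conj.hyps(3)]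
        tree_of_mixed_form[OF M'(2)] tree_of_mixed_form[OF M'(4)] mixed_conj.hyps(2) M'(3)
        mixed_conj.prems(2) M'(1) in auto)
  then show ?case using mixed_conj.IH M' by blast
next
  case (mixed_disj k A k2 B)
  then have "k' = Disj" using mixed_form_shape_unique mixed_form.mixed_disj by metis
  with mixed_disj.prems(1) obtain k1 A' k3 B' where M': "M' = LOr A' B'"
    "mixed_form k1 A'" "k1 \<noteq> Disj" "mixed_form k3 B'"
    by (cases rule: mixed_form.cases) auto
  have "tree_of A = tree_of A' \<and> tree_of B = tree_of B'"
    by (rule tdisj_mixed_unique)
      (use tree_of_mixed_form[OF mixed_disj.hyps(1)] tree_of_mixed_form[OF mixed_disj.hyps(3)]
        tree_of_mixed_form[OF M'(2)] tree_of_mixed_form[OF M'(4)] mixed_disj.hyps(2) M'(3)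
        mixed_disj.prems(2) M'(1) in auto)
  then show ?case using mixed_disj.IH M' by blast
qed

lemma normal_form_tree_of_inj:
  assumes c: "normal_form c" and d: "normal_form d" and eq: "tree_of c = tree_of d"
  shows "c = d"
proof -
  have classify: "(T_form x \<and> \<not> has_F (tree_of x))
      \<or> (\<exists>P. x = LAnd P Ff \<and> T_form P \<and> has_F (tree_of x) \<and> \<not> has_T (tree_of x))
      \<or> (\<exists>P M k. x = LAnd P M \<and> T_form P \<and> mixed_form k M \<and> mixed (tree_of x))"
    if "normal_form x" for x :: "'a trm"
    using that
  proof (cases rule: normal_form_cases)
    case T
    then show ?thesis using T_form_no_F by blast
  next
    case (F P)
    then show ?thesis using T_form_no_F[of P] has_T_or_has_F[of "tree_of P"] by auto
  next
    case (M P N k)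
    then show ?thesis
      using T_form_no_F[of P] tree_of_mixed_form[of k N] has_T_or_has_F[of "tree_of P"]
      by (auto simp: mixed_def)
  qed
  from classify[OF c] classify[OF d] eq show ?thesis
  proof (elim disjE exE conjE)
    assume "T_form c" "T_form d"
    then show ?thesis using T_form_tree_of_inj eq by blast
  next
    fix P Q assume "c = LAnd P Ff" "T_form P" "d = LAnd Q Ff" "T_form Q"
    then show ?thesis
      using eq T_form_tree_of_inj[of P Q] tconj_Leaf_False_inj[OF T_form_no_F T_form_no_F] by auto
  next
    fix P M k Q N k' assume *: "c = LAnd P M" "T_form P" "mixed_form k M"
      "d = LAnd Q N" "T_form Q" "mixed_form k' N"
    have "tree_of P = tree_of Q \<and> tree_of M = tree_of N"
      by (rule tconj_T_prefix_unique)
        (use * eq T_form_no_F tree_of_mixed_form[OF *(3)] tree_of_mixed_form[OF *(6)] in auto)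
    then show ?thesis using * T_form_tree_of_inj mixed_form_tree_of_inj by blast
  qed (auto simp: mixed_def)
qed

theorem theorem4p3:
  fixes P Q :: "'a trm"
  assumes "closed_scl P" and "closed_scl Q"
  shows "derivable EqFSCL scl_term P Q \<longleftrightarrow> derivable FSCL_ax (\<lambda>_. True) P Q"
proof
  assume "P \<approx>\<^sub>E Q"
  then have "tree_of P = tree_of Q" using derivable_den_eq EqFSCL_den_eq by blast
  then show "P \<approx>\<^sub>F Q" using fscl_complete assms unfolding closed_scl_def by blast
next
  assume "P \<approx>\<^sub>F Q"
  then have eq: "tree_of P = tree_of Q" using derivable_den_eq FSCL_ax_den_eq by blast
  have P: "scl_term P" "closed P" and Q: "scl_term Q" "closed Q"
    using assms unfolding closed_scl_def by auto
  obtain c where c: "normal_form c" "cls c = cls P" using normal_form_exists[OF P] by blast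
  obtain d where d: "normal_form d" "cls d = cls Q" using normal_form_exists[OF Q] by blast
  have cP: "c \<approx>\<^sub>E P" and dQ: "d \<approx>\<^sub>E Q"
    using c d P Q closed_scl_normal_form cls_eq_iff_eqfscl by blast+
  have "tree_of c = tree_of d"
    using eq derivable_den_eq[OF cP] derivable_den_eq[OF dQ] EqFSCL_den_eq by metis
  then have "c = d" using normal_form_tree_of_inj c d by blast
  then show "P \<approx>\<^sub>E Q" using cP dQ by (metis derivable.sym derivable.trans)
qed

end
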